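(* Let $S\in\mathbb{R}^{n\times n}$, $n=2m$, be nonsingular and skew-symmetric with eigenvalues $\pm\mathrm{i}\sigma_j$, where $\sigma_1=\cdots=\sigma_r>\sigma_{r+1}\ge\cdots\ge\sigma_m>0$ for some $1\le r<m$, and let $u_j,v_j$ be as follows: $\{u_1,\ldots,u_m,v_1,\ldots,v_m\}$ is an orthonormal basis of $\mathbb{R}^n$ with $Sv_j=\sigma_ju_j$, $Su_j=-\sigma_jv_j$. Let $q_0=2\sum_{i=1}^m(\alpha_{i,1}u_i-\alpha_{i,2}v_i)$ be a real unit vector with $\sum_{i=1}^r(\alpha_{i,1}^2+\alpha_{i,2}^2)>0$, and let $q_{2k+1}=Sq_{2k}/\|Sq_{2k}\|$, $q_{2k+2}=-Sq_{2k+1}/\|Sq_{2k+1}\|$. Let $x_e$ and $x_o$ be the unit vectors obtained by normalizing $\sum_{i=1}^r(\alpha_{i,1}u_i-\alpha_{i,2}v_i)$ and $\sum_{i=1}^r(-\alpha_{i,1}v_i-\alpha_{i,2}u_i)$, respectively. Then $q_{2k}\to x_e$ and $q_{2k-1}\to x_o$ as $k\to\infty$; $x_o\perp x_e$; $Sx_o=-\sigma_1x_e$ and $Sx_e=\sigma_1x_o$, so $\frac{\sqrt2}{2}(x_o\pm\mathrm{i}x_e)$ are unit eigenvectors of $S$ for $\pm\mathrm{i}\sigma_1$. Moreover, $|\tan\angle(q_{2k},x_e)|\le(\sigma_{r+1}/\sigma_1)^{2k}|\tan\angle(q_0,x_e)|$ and $|\tan\angle(q_{2k-1},x_o)|\le(\sigma_{r+1}/\sigma_1)^{2(k-1)}|\tan\angle(Sq_0,x_o)|$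 for all $k\ge1$.
   Context: $\|\cdot\|$ is the Euclidean norm; $\angle(x,y)$ is the acute angle between real vectors $x,y$, with $\cos\angle(x,y)=|x^Ty|/(\|x\|\|y\|)$. *)

theory Defs
  imports "HOL-Analysis.Analysis"
begin

definition acute_angle :: "'a::real_inner \<Rightarrow> 'a \<Rightarrow> real" where
  "acute_angle x y = arccos (\<bar>x \<bullet> y\<bar> / (norm x * norm y))"

definition cmat :: "real^'n^'m \<Rightarrow> complex^'n^'m" where
  "cmat A = (\<chi> i j. complex_of_real (A $ i $ j))"

definition cvec :: "real^'n \<Rightarrow> real^'n \<Rightarrow> complex^'n" where
  "cvec x y = (\<chi> j. Complex (x $ j) (y $ j))"

end

theory Submission
  imports Defs
begin

text \<open>In the basis \<open>u\<^sub>i, v\<^sub>i\<close> the matrix \<open>S\<close> sends the coefficient pair \<open>(a, b)\<close>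
  to \<open>(\<sigma> b, -\<sigma> a)\<close>, so every iterate is the normalisation of a vector whose \<open>i\<close>-th
  coefficients are \<open>\<sigma> i ^ j\<close> times one of two fixed patterns. Its part with \<open>i \<le> r\<close> is
  \<open>\<sigma> 1 ^ j\<close> times a fixed vector, the orthogonal rest shrinks at least like
  \<open>\<sigma> (r + 1) ^ j\<close>, and the tangent of the angle between the iterate and the fixed
  direction is the ratio of the two norms.\<close>

lemma acute_angle_scaleR_left:
  fixes x y :: "'a::real_inner"
  assumes "c \<noteq> 0"
  shows "acute_angle (c *\<^sub>R x) y = acute_angle x y"
  using assms by (simp add: acute_angle_def abs_mult)

lemma acute_angle_sgn_left:
  fixes x y :: "'a::real_inner"
  shows "acute_angle (sgn x) y = acute_angle x y"
  by (cases "x = 0") (simp_all add: sgn_div_norm acute_angle_scaleR_left)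

lemma scaleR_inverse_norm_eq_sgn:
  fixes y :: "'a::real_normed_vector"
  shows "(1 / norm y) *\<^sub>R y = sgn y"
  by (simp add: sgn_div_norm divide_inverse)

lemma
  fixes A R :: "'a::real_inner"
  assumes A: "norm A = 1" and orth: "A \<bullet> R = 0" and t: "t > 0"
  shows tan_acute_angle_orthogonal: "tan (acute_angle (t *\<^sub>R A + R) A) = norm R / t"
    and dist_sgn_orthogonal: "norm (sgn (t *\<^sub>R A + R) - A) \<le> 2 * norm R / t"
proof -
  define x where "x = t *\<^sub>R A + R"
  have xA: "x \<bullet> A = t"
    using A orth by (simp add: x_def inner_add_left inner_commute[of R A] dot_square_norm)
  have nx2: "(norm x)\<^sup>2 = t\<^sup>2 + (norm R)\<^sup>2"
    using norm_add_Pythagorean[of "t *\<^sub>R A" R] orth A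
    by (simp add: x_def orthogonal_def power_mult_distrib)
  then have nxt: "t \<le> norm x"
    using power2_le_imp_le[of t "norm x"] by simp
  have nx: "norm x > 0" using nxt t by linarith
  define c where "c = t / norm x"
  have c: "0 < c" "c \<le> 1" using nxt nx t by (auto simp: c_def)
  have "1 - c\<^sup>2 = ((norm x)\<^sup>2 - t\<^sup>2) / (norm x)\<^sup>2"
    using nx by (simp add: c_def power_divide field_simps)
  then have "1 - c\<^sup>2 = (norm R / norm x)\<^sup>2" by (simp add: nx2 power_divide)
  then have sin: "sqrt (1 - c\<^sup>2) = norm R / norm x" by simp
  have "tan (acute_angle x A) = sqrt (1 - c\<^sup>2) / c"
    using c xA A t by (simp add: acute_angle_def c_def tan_def sin_arccos_abs)
  also have "\<dots> = norm R / t" unfolding sin using nx t by (simp add: c_def)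
  finally show "tan (acute_angle (t *\<^sub>R A + R) A) = norm R / t" by (simp add: x_def)
  have "sgn x - A = (c - 1) *\<^sub>R A + (1 / norm x) *\<^sub>R R"
    using nx by (simp add: sgn_div_norm x_def c_def algebra_simps divide_inverse)
  then have "norm (sgn x - A) \<le> (1 - c) + norm R / norm x"
    using norm_triangle_ineq[of "(c - 1) *\<^sub>R A" "(1 / norm x) *\<^sub>R R"] c A by simp
  also have "1 - c \<le> norm R / norm x"
  proof -
    have "norm x \<le> t + norm R"
      using norm_triangle_ineq[of "t *\<^sub>R A" R] A t by (simp add: x_def)
    moreover have "1 - c = (norm x - t) / norm x" using nx by (simp add: c_def field_simps)
    ultimately show ?thesis using nx by (simp add: divide_right_mono)
  qed
  also have "norm R / norm x \<le> norm R / t" using nxt t by (simp add: frac_le)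
  finally show "norm (sgn (t *\<^sub>R A + R) - A) \<le> 2 * norm R / t" by (simp add: x_def)
qed

lemma cmat_cvec: "cmat S *v cvec x y = cvec (S *v x) (S *v y)"
  by (simp add: vec_eq_iff cmat_def cvec_def matrix_vector_mult_def complex_eq_iff Re_sum Im_sum)

lemma norm_cvec: "norm (cvec x y) = sqrt ((norm x)\<^sup>2 + (norm y)\<^sup>2)"
proof -
  have "cvec x y \<bullet> cvec x y = x \<bullet> x + y \<bullet> y"
    by (simp add: inner_vec_def cvec_def inner_complex_def sum.distrib)
  then show ?thesis by (simp add: norm_eq_sqrt_inner power2_norm_eq_inner)
qed

lemma cmat_scaleR_cvec_eigenvector:
  fixes S :: "real^'n^'n"
  assumes "S *v y = - (s *\<^sub>R x)" and "S *v x = s *\<^sub>R y"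
  shows "cmat S *v (c *\<^sub>R cvec y x) = (\<i> * complex_of_real s) *s (c *\<^sub>R cvec y x)"
proof -
  have "cmat S *v (c *\<^sub>R cvec y x) = c *\<^sub>R (cmat S *v cvec y x)"
    by (simp add: vec_eq_iff matrix_vector_mult_def scaleR_sum_right)
  also have "cmat S *v cvec y x = cvec (- (s *\<^sub>R x)) (s *\<^sub>R y)"
    by (simp add: cmat_cvec assms)
  finally show ?thesis by (simp add: vec_eq_iff cvec_def complex_eq_iff)
qed

lemma norm_scaleR_cvec_unit:
  assumes "norm x = 1" and "norm y = 1"
  shows "norm ((sqrt 2 / 2) *\<^sub>R cvec x y) = 1"
  using assms by (simp add: norm_cvec real_sqrt_mult[symmetric])

text \<open>Since \<open>sgn 0 = 0\<close> this needs no hypothesis, so the normalised iterates can be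
  followed without ever showing that a norm is nonzero.\<close>
lemma sgn_matrix_vector_mult_sgn:
  fixes S :: "real^'n^'m"
  shows "sgn (S *v sgn x) = sgn (S *v x)"
  by (cases "x = 0") (simp_all add: sgn_div_norm matrix_vector_mult_scaleR sgn_scaleR)

locale real_schur_pairs =
  fixes S :: "real^'n^'n" and m r :: nat and \<sigma> :: "nat \<Rightarrow> real" and u v :: "nat \<Rightarrow> real^'n"
  assumes r: "1 \<le> r" "r < m"
    and sig_top: "\<And>j. 1 \<le> j \<Longrightarrow> j \<le> r \<Longrightarrow> \<sigma> j = \<sigma> 1"
    and sig_gap: "\<sigma> 1 > \<sigma> (r + 1)"
    and sig_mono: "\<And>j. r + 1 \<le> j \<Longrightarrow> j < m \<Longrightarrow> \<sigma> j \<ge> \<sigma> (j + 1)"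
    and sig_pos: "\<sigma> m > 0"
    and uu: "\<And>i j. i \<in> {1..m} \<Longrightarrow> j \<in> {1..m} \<Longrightarrow> u i \<bullet> u j = (if i = j then 1 else 0)"
    and vv: "\<And>i j. i \<in> {1..m} \<Longrightarrow> j \<in> {1..m} \<Longrightarrow> v i \<bullet> v j = (if i = j then 1 else 0)"
    and uv: "\<And>i j. i \<in> {1..m} \<Longrightarrow> j \<in> {1..m} \<Longrightarrow> u i \<bullet> v j = 0"
    and Sv: "\<And>j. j \<in> {1..m} \<Longrightarrow> S *v v j = \<sigma> j *\<^sub>R u j"
    and Su: "\<And>j. j \<in> {1..m} \<Longrightarrow> S *v u j = - (\<sigma> j *\<^sub>R v j)"
begin

lemma sigma_trailing_le: "r + 1 \<le> i \<Longrightarrow> i \<le> m \<Longrightarrow> \<sigma> i \<le> \<sigma> (r + 1)"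
proof (induction i rule: dec_induct)
  case (step i) then show ?case using sig_mono[of i] by simp
qed simp

lemma sigma_ge_last: "i \<le> m \<Longrightarrow> r + 1 \<le> i \<Longrightarrow> \<sigma> m \<le> \<sigma> i"
proof (induction i rule: inc_induct)
  case (step i) then show ?case using sig_mono[of i] by simp
qed simp

lemma sigma_pos: "i \<in> {1..m} \<Longrightarrow> \<sigma> i > 0"
  using sig_top[of i] sigma_ge_last[of i] sigma_ge_last[of "r + 1"] sig_pos sig_gap r
  by (cases "i \<le> r") auto

definition uv_comb :: "(nat \<Rightarrow> real) \<Rightarrow> (nat \<Rightarrow> real) \<Rightarrow> real^'n" where
  "uv_comb a b = (\<Sum>i=1..m. a i *\<^sub>R u i + b i *\<^sub>R v i)"

definition leading :: "(nat \<Rightarrow> real) \<Rightarrow> nat \<Rightarrow> real" where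
  "leading a i = (if i \<le> r then a i else 0)"

definition trailing :: "(nat \<Rightarrow> real) \<Rightarrow> nat \<Rightarrow> real" where
  "trailing a i = (if i \<le> r then 0 else a i)"

definition sigma_scale :: "nat \<Rightarrow> (nat \<Rightarrow> real) \<Rightarrow> nat \<Rightarrow> real" where
  "sigma_scale j a i = \<sigma> i ^ j * a i"

abbreviation dominant_part :: "(nat \<Rightarrow> real) \<Rightarrow> (nat \<Rightarrow> real) \<Rightarrow> real^'n" where
  "dominant_part a b \<equiv> uv_comb (leading a) (leading b)"

abbreviation remainder_part :: "(nat \<Rightarrow> real) \<Rightarrow> (nat \<Rightarrow> real) \<Rightarrow> real^'n" where
  "remainder_part a b \<equiv> uv_comb (trailing a) (trailing b)"

abbreviation power_comb :: "nat \<Rightarrow> (nat \<Rightarrow> real) \<Rightarrow> (nat \<Rightarrow> real) \<Rightarrow> real^'n" where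
  "power_comb j a b \<equiv> uv_comb (sigma_scale j a) (sigma_scale j b)"

lemma inner_uv_comb: "uv_comb a b \<bullet> uv_comb c d = (\<Sum>i=1..m. a i * c i + b i * d i)"
proof -
  have "uv_comb a b \<bullet> uv_comb c d = (\<Sum>i\<in>{1..m}. \<Sum>j\<in>{1..m}.
      (a i *\<^sub>R u i + b i *\<^sub>R v i) \<bullet> (c j *\<^sub>R u j + d j *\<^sub>R v j))"
    by (simp add: uv_comb_def inner_sum_left inner_sum_right) (rule sum.swap)
  also have "\<dots> = (\<Sum>i\<in>{1..m}. \<Sum>j\<in>{1..m}. if i = j then a i * c i + b i * d i else 0)"
    by (intro sum.cong refl) (simp add: inner_add_left inner_add_right uu vv uv inner_commute[of "v _" "u _"])
  finally show ?thesis by simp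
qed

lemma norm_uv_comb_sq: "(norm (uv_comb a b))\<^sup>2 = (\<Sum>i=1..m. (a i)\<^sup>2 + (b i)\<^sup>2)"
  unfolding power2_norm_eq_inner inner_uv_comb by (simp add: power2_eq_square)

lemma uv_comb_cong:
  "(\<And>i. i \<in> {1..m} \<Longrightarrow> a i = a' i) \<Longrightarrow> (\<And>i. i \<in> {1..m} \<Longrightarrow> b i = b' i) \<Longrightarrow>
    uv_comb a b = uv_comb a' b'"
  unfolding uv_comb_def by (intro sum.cong) auto

lemma uv_comb_scaleR: "uv_comb (\<lambda>i. c * a i) (\<lambda>i. c * b i) = c *\<^sub>R uv_comb a b"
  by (simp add: uv_comb_def scaleR_sum_right scaleR_add_right)

lemma uv_comb_uminus: "uv_comb (\<lambda>i. - a i) (\<lambda>i. - b i) = - uv_comb a b"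
  using uv_comb_scaleR[of "-1" a b] by simp

lemma uv_comb_leading_trailing: "uv_comb a b = dominant_part a b + remainder_part a b"
  unfolding uv_comb_def sum.distrib[symmetric]
  by (intro sum.cong refl) (simp add: leading_def trailing_def)

lemma matrix_vector_mult_uv_comb:
  "S *v uv_comb a b = uv_comb (\<lambda>i. \<sigma> i * b i) (\<lambda>i. - (\<sigma> i * a i))"
proof -
  have "S *v uv_comb a b = (\<Sum>i=1..m. S *v (a i *\<^sub>R u i + b i *\<^sub>R v i))"
    by (simp add: uv_comb_def linear_sum[OF matrix_vector_mul_linear] o_def)
  also have "\<dots> = uv_comb (\<lambda>i. \<sigma> i * b i) (\<lambda>i. - (\<sigma> i * a i))"
    unfolding uv_comb_def
    by (intro sum.cong refl) (simp add: matrix_vector_right_distrib matrix_vector_mult_scaleR Su Sv mult.commute)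
  finally show ?thesis .
qed

lemma matrix_vector_mult_power_comb:
  "S *v power_comb j a b = power_comb (Suc j) b (\<lambda>i. - a i)"
  unfolding matrix_vector_mult_uv_comb by (intro uv_comb_cong) (simp_all add: sigma_scale_def)

lemma inner_dominant_remainder: "dominant_part a b \<bullet> remainder_part c d = 0"
  by (simp add: inner_uv_comb leading_def trailing_def sum.neutral)

lemma dominant_part_sigma_scale: "dominant_part (sigma_scale j a) (sigma_scale j b) = \<sigma> 1 ^ j *\<^sub>R dominant_part a b"
  unfolding uv_comb_scaleR[symmetric]
proof (intro uv_comb_cong)
  fix i assume "i \<in> {1..m}"
  then show "leading (sigma_scale j a) i = \<sigma> 1 ^ j * leading a i"
    and "leading (sigma_scale j b) i = \<sigma> 1 ^ j * leading b i"
    by (auto simp: leading_def sigma_scale_def sig_top[of i])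
qed

lemma sigma_scale_add: "sigma_scale (d + j) a = sigma_scale d (sigma_scale j a)"
  by (simp add: sigma_scale_def fun_eq_iff power_add)

lemma norm_remainder_sigma_scale_le:
  "norm (remainder_part (sigma_scale j a) (sigma_scale j b)) \<le> \<sigma> (r + 1) ^ j * norm (remainder_part a b)"
proof (rule power2_le_imp_le)
  show "0 \<le> \<sigma> (r + 1) ^ j * norm (remainder_part a b)"
    using sigma_pos[of "r + 1"] r by simp
  have "(norm (remainder_part (sigma_scale j a) (sigma_scale j b)))\<^sup>2
      = (\<Sum>i=1..m. (\<sigma> i ^ j)\<^sup>2 * ((trailing a i)\<^sup>2 + (trailing b i)\<^sup>2))"
    unfolding norm_uv_comb_sq
    by (intro sum.cong refl) (simp add: trailing_def sigma_scale_def power_mult_distrib algebra_simps)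
  also have "\<dots> \<le> (\<Sum>i=1..m. (\<sigma> (r + 1) ^ j)\<^sup>2 * ((trailing a i)\<^sup>2 + (trailing b i)\<^sup>2))"
  proof (intro sum_mono)
    fix i assume i: "i \<in> {1..m}"
    show "(\<sigma> i ^ j)\<^sup>2 * ((trailing a i)\<^sup>2 + (trailing b i)\<^sup>2)
        \<le> (\<sigma> (r + 1) ^ j)\<^sup>2 * ((trailing a i)\<^sup>2 + (trailing b i)\<^sup>2)"
    proof (cases "i \<le> r")
      case False
      then have "(\<sigma> i ^ j)\<^sup>2 \<le> (\<sigma> (r + 1) ^ j)\<^sup>2"
        using i sigma_trailing_le[of i] sigma_pos[of i] by (intro power_mono) auto
      then show ?thesis by (simp add: mult_right_mono)
    qed (simp add: trailing_def)
  qed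
  also have "\<dots> = (\<sigma> (r + 1) ^ j * norm (remainder_part a b))\<^sup>2"
    by (simp add: power_mult_distrib norm_uv_comb_sq sum_distrib_left)
  finally show "(norm (remainder_part (sigma_scale j a) (sigma_scale j b)))\<^sup>2
      \<le> (\<sigma> (r + 1) ^ j * norm (remainder_part a b))\<^sup>2" .
qed

lemma power_comb_uminus: "power_comb j (\<lambda>i. - a i) (\<lambda>i. - b i) = - power_comb j a b"
proof -
  have "power_comb j (\<lambda>i. - a i) (\<lambda>i. - b i)
      = uv_comb (\<lambda>i. - sigma_scale j a i) (\<lambda>i. - sigma_scale j b i)"
    by (intro uv_comb_cong) (simp_all add: sigma_scale_def)
  then show ?thesis by (simp only: uv_comb_uminus)
qed

lemma sum_leading: "(\<Sum>i=1..m. if i \<le> r then f i else 0) = (\<Sum>i=1..r. f i)"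
proof -
  have "{1..m} \<inter> {i. i \<le> r} = {1..r}" using r by auto
  then show ?thesis using sum.inter_restrict[of "{1..m}" f "{i. i \<le> r}"] by simp
qed

lemma dominant_part_eq_sum: "dominant_part a b = (\<Sum>i=1..r. a i *\<^sub>R u i + b i *\<^sub>R v i)"
proof -
  have "dominant_part a b = (\<Sum>i=1..m. if i \<le> r then a i *\<^sub>R u i + b i *\<^sub>R v i else 0)"
    unfolding uv_comb_def by (intro sum.cong refl) (simp add: leading_def)
  then show ?thesis by (simp only: sum_leading)
qed

lemma norm_dominant_part_sq: "(norm (dominant_part a b))\<^sup>2 = (\<Sum>i=1..r. (a i)\<^sup>2 + (b i)\<^sup>2)"
proof -
  have "(norm (dominant_part a b))\<^sup>2 = (\<Sum>i=1..m. if i \<le> r then (a i)\<^sup>2 + (b i)\<^sup>2 else 0)"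
    unfolding norm_uv_comb_sq by (intro sum.cong refl) (simp add: leading_def)
  then show ?thesis by (simp only: sum_leading)
qed

lemma inner_dominant_part_rotate: "dominant_part a b \<bullet> dominant_part b (\<lambda>i. - a i) = 0"
  by (simp add: inner_uv_comb leading_def sum.neutral)

lemma matrix_vector_mult_sgn_dominant_part:
  "S *v sgn (dominant_part a b) = \<sigma> 1 *\<^sub>R sgn (dominant_part b (\<lambda>i. - a i))"
proof -
  have "S *v dominant_part a b = \<sigma> 1 *\<^sub>R dominant_part b (\<lambda>i. - a i)"
    unfolding matrix_vector_mult_uv_comb uv_comb_scaleR[symmetric]
  proof (intro uv_comb_cong)
    fix i assume "i \<in> {1..m}"
    then show "\<sigma> i * leading b i = \<sigma> 1 * leading b i"
      and "- (\<sigma> i * leading a i) = \<sigma> 1 * leading (\<lambda>i. - a i) i"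
      by (auto simp: leading_def sig_top[of i])
  qed
  moreover have "norm (dominant_part b (\<lambda>i. - a i)) = norm (dominant_part a b)"
  proof -
    have "(norm (dominant_part b (\<lambda>i. - a i)))\<^sup>2 = (norm (dominant_part a b))\<^sup>2"
      by (simp add: norm_dominant_part_sq add.commute)
    then show ?thesis by (simp add: power2_eq_iff_nonneg)
  qed
  ultimately show ?thesis by (simp add: sgn_div_norm matrix_vector_mult_scaleR)
qed

context
  fixes a b :: "nat \<Rightarrow> real"
  assumes dominant_nonzero: "dominant_part a b \<noteq> 0"
begin

lemma power_comb_decomposition:
  "power_comb j a b = (\<sigma> 1 ^ j * norm (dominant_part a b)) *\<^sub>R sgn (dominant_part a b)
     + remainder_part (sigma_scale j a) (sigma_scale j b)"
  using dominant_nonzero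
  by (subst uv_comb_leading_trailing) (simp add: dominant_part_sigma_scale sgn_div_norm)

lemma
  shows tan_acute_angle_power_comb:
    "tan (acute_angle (power_comb j a b) (sgn (dominant_part a b)))
      = norm (remainder_part (sigma_scale j a) (sigma_scale j b)) / (\<sigma> 1 ^ j * norm (dominant_part a b))"
    and dist_sgn_power_comb:
    "norm (sgn (power_comb j a b) - sgn (dominant_part a b))
      \<le> 2 * tan (acute_angle (power_comb j a b) (sgn (dominant_part a b)))"
proof -
  define t where "t = \<sigma> 1 ^ j * norm (dominant_part a b)"
  define R where "R = remainder_part (sigma_scale j a) (sigma_scale j b)"
  have A: "norm (sgn (dominant_part a b)) = 1" using dominant_nonzero by (simp add: norm_sgn)
  have orth: "sgn (dominant_part a b) \<bullet> R = 0"
    by (simp add: R_def sgn_div_norm inner_dominant_remainder)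
  have t: "t > 0" using sigma_pos[of 1] r dominant_nonzero by (simp add: t_def)
  have P: "power_comb j a b = t *\<^sub>R sgn (dominant_part a b) + R"
    unfolding t_def R_def by (rule power_comb_decomposition)
  show tan: "tan (acute_angle (power_comb j a b) (sgn (dominant_part a b)))
      = norm (remainder_part (sigma_scale j a) (sigma_scale j b)) / (\<sigma> 1 ^ j * norm (dominant_part a b))"
    unfolding P using tan_acute_angle_orthogonal[OF A orth t] by (simp add: t_def R_def)
  show "norm (sgn (power_comb j a b) - sgn (dominant_part a b))
      \<le> 2 * tan (acute_angle (power_comb j a b) (sgn (dominant_part a b)))"
    unfolding tan using dist_sgn_orthogonal[OF A orth t] P by (simp add: t_def R_def)
qed

lemma tan_acute_angle_power_comb_nonneg:
  "0 \<le> tan (acute_angle (power_comb j a b) (sgn (dominant_part a b)))"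
  using sigma_pos[of 1] r by (simp add: tan_acute_angle_power_comb)

lemma tan_acute_angle_power_comb_le:
  assumes "i \<le> j"
  shows "tan (acute_angle (power_comb j a b) (sgn (dominant_part a b)))
    \<le> (\<sigma> (r + 1) / \<sigma> 1) ^ (j - i) * tan (acute_angle (power_comb i a b) (sgn (dominant_part a b)))"
proof -
  have j: "j = (j - i) + i" using assms by simp
  have s1: "\<sigma> 1 > 0" using sigma_pos[of 1] r by simp
  have H: "norm (dominant_part a b) > 0" using dominant_nonzero by simp
  have "norm (remainder_part (sigma_scale j a) (sigma_scale j b))
      \<le> \<sigma> (r + 1) ^ (j - i) * norm (remainder_part (sigma_scale i a) (sigma_scale i b))"
    by (subst (1 2) j) (simp only: sigma_scale_add norm_remainder_sigma_scale_le)
  then have "norm (remainder_part (sigma_scale j a) (sigma_scale j b)) / (\<sigma> 1 ^ j * norm (dominant_part a b))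
      \<le> \<sigma> (r + 1) ^ (j - i) * norm (remainder_part (sigma_scale i a) (sigma_scale i b))
         / (\<sigma> 1 ^ j * norm (dominant_part a b))"
    using s1 H by (simp add: divide_right_mono)
  also have "\<dots> = (\<sigma> (r + 1) / \<sigma> 1) ^ (j - i)
      * (norm (remainder_part (sigma_scale i a) (sigma_scale i b)) / (\<sigma> 1 ^ i * norm (dominant_part a b)))"
    using s1 H by (subst (1) j) (simp add: power_add power_divide)
  finally show ?thesis unfolding tan_acute_angle_power_comb .
qed

lemma sgn_power_comb_tendsto: "(\<lambda>j. sgn (power_comb j a b)) \<longlonglongrightarrow> sgn (dominant_part a b)"
proof -
  define \<rho> where "\<rho> = \<sigma> (r + 1) / \<sigma> 1"
  define \<tau> where "\<tau> = tan (acute_angle (power_comb 0 a b) (sgn (dominant_part a b)))"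
  have "0 \<le> \<rho>" "\<rho> < 1"
    using sigma_pos[of 1] sigma_pos[of "r + 1"] r sig_gap by (auto simp: \<rho>_def)
  then have "(\<lambda>j. 2 * (\<rho> ^ j * \<tau>)) \<longlonglongrightarrow> 2 * (0 * \<tau>)"
    by (intro tendsto_intros LIMSEQ_power_zero) simp
  then have lim: "(\<lambda>j. 2 * (\<rho> ^ j * \<tau>)) \<longlonglongrightarrow> 0" by simp
  have bound: "\<forall>\<^sub>F j in sequentially.
      norm (sgn (power_comb j a b) - sgn (dominant_part a b)) \<le> 2 * (\<rho> ^ j * \<tau>)"
  proof (intro always_eventually allI)
    fix j
    show "norm (sgn (power_comb j a b) - sgn (dominant_part a b)) \<le> 2 * (\<rho> ^ j * \<tau>)"
      using dist_sgn_power_comb[of j] tan_acute_angle_power_comb_le[OF le0, of j, unfolded diff_zero]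
      unfolding \<rho>_def \<tau>_def by linarith
  qed
  show ?thesis using Lim_null_comparison[OF bound lim] by (simp add: LIM_zero_iff)
qed

end

end

locale power_iteration = real_schur_pairs S m r \<sigma> u v
  for S :: "real^'n^'n" and m r \<sigma> u v +
  fixes \<alpha>1 \<alpha>2 :: "nat \<Rightarrow> real" and q :: "nat \<Rightarrow> real^'n"
  assumes alpha_pos: "(\<Sum>i=1..r. (\<alpha>1 i)\<^sup>2 + (\<alpha>2 i)\<^sup>2) > 0"
    and q0: "q 0 = 2 *\<^sub>R (\<Sum>i=1..m. \<alpha>1 i *\<^sub>R u i - \<alpha>2 i *\<^sub>R v i)"
    and q0_unit: "norm (q 0) = 1"
    and q_odd: "\<And>k. q (2 * k + 1) = (1 / norm (S *v q (2 * k))) *\<^sub>R (S *v q (2 * k))"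
    and q_even: "\<And>k. q (2 * k + 2) = - ((1 / norm (S *v q (2 * k + 1))) *\<^sub>R (S *v q (2 * k + 1)))"
begin

abbreviation x_even :: "real^'n" where
  "x_even \<equiv> sgn (dominant_part \<alpha>1 (\<lambda>i. - \<alpha>2 i))"

abbreviation x_odd :: "real^'n" where
  "x_odd \<equiv> sgn (dominant_part (\<lambda>i. - \<alpha>2 i) (\<lambda>i. - \<alpha>1 i))"

lemma q_eq_sgn_power_comb:
  "q (2 * k) = sgn (power_comb (2 * k) \<alpha>1 (\<lambda>i. - \<alpha>2 i))
   \<and> q (2 * k + 1) = sgn (power_comb (2 * k + 1) (\<lambda>i. - \<alpha>2 i) (\<lambda>i. - \<alpha>1 i))"
proof (induction k)
  case 0
  have P: "q 0 = 2 *\<^sub>R power_comb 0 \<alpha>1 (\<lambda>i. - \<alpha>2 i)"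
    by (simp add: q0 uv_comb_def sigma_scale_def)
  have "q 0 = sgn (q 0)" using q0_unit by (simp add: sgn_div_norm)
  also have "\<dots> = sgn (power_comb 0 \<alpha>1 (\<lambda>i. - \<alpha>2 i))" by (simp only: P sgn_scaleR) simp
  finally have "q 0 = sgn (power_comb 0 \<alpha>1 (\<lambda>i. - \<alpha>2 i))" .
  then show ?case
    using q_odd[of 0] by (simp add: scaleR_inverse_norm_eq_sgn sgn_matrix_vector_mult_sgn matrix_vector_mult_power_comb)
next
  case (Suc k)
  then have "q (2 * Suc k) = - sgn (power_comb (2 * Suc k) (\<lambda>i. - \<alpha>1 i) \<alpha>2)"
    using q_even[of k]
    by (simp add: scaleR_inverse_norm_eq_sgn sgn_matrix_vector_mult_sgn matrix_vector_mult_power_comb)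
  also have "\<dots> = sgn (power_comb (2 * Suc k) \<alpha>1 (\<lambda>i. - \<alpha>2 i))"
    using power_comb_uminus[of "2 * Suc k" \<alpha>1 "\<lambda>i. - \<alpha>2 i"] by (simp add: sgn_minus)
  finally show ?case
    using q_odd[of "Suc k"] by (simp add: scaleR_inverse_norm_eq_sgn sgn_matrix_vector_mult_sgn matrix_vector_mult_power_comb)
qed

lemma dominant_even_nonzero: "dominant_part \<alpha>1 (\<lambda>i. - \<alpha>2 i) \<noteq> 0"
  using norm_dominant_part_sq[of \<alpha>1 "\<lambda>i. - \<alpha>2 i"] alpha_pos by auto

lemma dominant_odd_nonzero: "dominant_part (\<lambda>i. - \<alpha>2 i) (\<lambda>i. - \<alpha>1 i) \<noteq> 0"
  using norm_dominant_part_sq[of "\<lambda>i. - \<alpha>2 i" "\<lambda>i. - \<alpha>1 i"] alpha_pos by (auto simp: add.commute)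

lemma x_even_unit: "norm x_even = 1"
  using dominant_even_nonzero by (simp add: norm_sgn)

lemma x_odd_unit: "norm x_odd = 1"
  using dominant_odd_nonzero by (simp add: norm_sgn)

lemma inner_x_odd_x_even: "x_odd \<bullet> x_even = 0"
  using inner_dominant_part_rotate[of \<alpha>1 "\<lambda>i. - \<alpha>2 i"] by (simp add: sgn_div_norm inner_commute)

lemma matrix_vector_mult_x_even: "S *v x_even = \<sigma> 1 *\<^sub>R x_odd"
  using matrix_vector_mult_sgn_dominant_part[of \<alpha>1 "\<lambda>i. - \<alpha>2 i"] by simp

lemma matrix_vector_mult_x_odd: "S *v x_odd = - (\<sigma> 1 *\<^sub>R x_even)"
proof -
  have "dominant_part (\<lambda>i. - \<alpha>1 i) \<alpha>2 = - dominant_part \<alpha>1 (\<lambda>i. - \<alpha>2 i)"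
    unfolding uv_comb_uminus[symmetric] by (intro uv_comb_cong) (simp_all add: leading_def)
  then show ?thesis
    using matrix_vector_mult_sgn_dominant_part[of "\<lambda>i. - \<alpha>2 i" "\<lambda>i. - \<alpha>1 i"] by (simp add: sgn_minus)
qed

lemma q_even_tendsto: "(\<lambda>k. q (2 * k)) \<longlonglongrightarrow> x_even"
proof -
  have "strict_mono (\<lambda>k::nat. 2 * k)" by (simp add: strict_mono_def)
  from LIMSEQ_subseq_LIMSEQ[OF sgn_power_comb_tendsto[OF dominant_even_nonzero] this]
  show ?thesis by (simp add: o_def q_eq_sgn_power_comb)
qed

lemma q_odd_tendsto: "(\<lambda>k. q (2 * k - 1)) \<longlonglongrightarrow> x_odd"
proof -
  have "strict_mono (\<lambda>k::nat. 2 * k + 1)" by (simp add: strict_mono_def)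
  from LIMSEQ_subseq_LIMSEQ[OF sgn_power_comb_tendsto[OF dominant_odd_nonzero] this]
  have "(\<lambda>k. sgn (power_comb (2 * k + 1) (\<lambda>i. - \<alpha>2 i) (\<lambda>i. - \<alpha>1 i))) \<longlonglongrightarrow> x_odd"
    by (simp add: o_def)
  moreover have "q (2 * Suc k - 1) = sgn (power_comb (2 * k + 1) (\<lambda>i. - \<alpha>2 i) (\<lambda>i. - \<alpha>1 i))" for k
    using q_eq_sgn_power_comb[of k] by simp
  ultimately have "(\<lambda>k. q (2 * Suc k - 1)) \<longlonglongrightarrow> x_odd" by simp
  then show ?thesis by (rule LIMSEQ_imp_Suc)
qed

lemma tan_q_even_le:
  "\<bar>tan (acute_angle (q (2 * k)) x_even)\<bar>
    \<le> (\<sigma> (r + 1) / \<sigma> 1) ^ (2 * k) * \<bar>tan (acute_angle (q 0) x_even)\<bar>"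
  using tan_acute_angle_power_comb_le[OF dominant_even_nonzero, of 0 "2 * k"]
    q_eq_sgn_power_comb[of k] q_eq_sgn_power_comb[of 0]
    tan_acute_angle_power_comb_nonneg[OF dominant_even_nonzero]
  by (simp add: acute_angle_sgn_left)

lemma tan_q_odd_le:
  assumes "1 \<le> k"
  shows "\<bar>tan (acute_angle (q (2 * k - 1)) x_odd)\<bar>
    \<le> (\<sigma> (r + 1) / \<sigma> 1) ^ (2 * (k - 1)) * \<bar>tan (acute_angle (S *v q 0) x_odd)\<bar>"
proof -
  obtain j where k: "k = Suc j" using assms by (cases k) auto
  have "acute_angle (S *v q 0) x_odd = acute_angle (sgn (S *v q 0)) x_odd"
    by (simp add: acute_angle_sgn_left)
  also have "\<dots> = acute_angle (power_comb 1 (\<lambda>i. - \<alpha>2 i) (\<lambda>i. - \<alpha>1 i)) x_odd"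
    using q_eq_sgn_power_comb[of 0]
    by (simp add: sgn_matrix_vector_mult_sgn matrix_vector_mult_power_comb acute_angle_sgn_left)
  finally show ?thesis
    using tan_acute_angle_power_comb_le[OF dominant_odd_nonzero, of 1 "2 * j + 1"]
      q_eq_sgn_power_comb[of j] tan_acute_angle_power_comb_nonneg[OF dominant_odd_nonzero]
    by (simp add: k acute_angle_sgn_left)
qed

end

theorem mainTheorem6:
  fixes S :: "real^'n^'n" and m r :: nat
    and \<sigma> \<alpha>1 \<alpha>2 :: "nat \<Rightarrow> real" and u v q :: "nat \<Rightarrow> real^'n"
    and xe xo :: "real^'n"
  assumes dim: "CARD('n) = 2 * m"
    and skew: "transpose S = - S"
    and nonsing: "invertible S"
    and r: "1 \<le> r" "r < m"
    and sig_top: "\<And>j. 1 \<le> j \<Longrightarrow> j \<le> r \<Longrightarrow> \<sigma> j = \<sigma> 1"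
    and sig_gap: "\<sigma> 1 > \<sigma> (r + 1)"
    and sig_mono: "\<And>j. r + 1 \<le> j \<Longrightarrow> j < m \<Longrightarrow> \<sigma> j \<ge> \<sigma> (j + 1)"
    and sig_pos: "\<sigma> m > 0"
    and uu: "\<And>i j. i \<in> {1..m} \<Longrightarrow> j \<in> {1..m} \<Longrightarrow> u i \<bullet> u j = (if i = j then 1 else 0)"
    and vv: "\<And>i j. i \<in> {1..m} \<Longrightarrow> j \<in> {1..m} \<Longrightarrow> v i \<bullet> v j = (if i = j then 1 else 0)"
    and uv: "\<And>i j. i \<in> {1..m} \<Longrightarrow> j \<in> {1..m} \<Longrightarrow> u i \<bullet> v j = 0"
    and basis: "span (u ` {1..m} \<union> v ` {1..m}) = UNIV"
    and Sv: "\<And>j. j \<in> {1..m} \<Longrightarrow> S *v v j = \<sigma> j *\<^sub>R u j"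
    and Su: "\<And>j. j \<in> {1..m} \<Longrightarrow> S *v u j = - (\<sigma> j *\<^sub>R v j)"
    and q0: "q 0 = 2 *\<^sub>R (\<Sum>i=1..m. \<alpha>1 i *\<^sub>R u i - \<alpha>2 i *\<^sub>R v i)"
    and q0_unit: "norm (q 0) = 1"
    and alpha_pos: "(\<Sum>i=1..r. (\<alpha>1 i)\<^sup>2 + (\<alpha>2 i)\<^sup>2) > 0"
    and q_odd: "\<And>k. q (2 * k + 1) = (1 / norm (S *v q (2 * k))) *\<^sub>R (S *v q (2 * k))"
    and q_even: "\<And>k. q (2 * k + 2) = - ((1 / norm (S *v q (2 * k + 1))) *\<^sub>R (S *v q (2 * k + 1)))"
    and xe_def: "xe = (1 / norm (\<Sum>i=1..r. \<alpha>1 i *\<^sub>R u i - \<alpha>2 i *\<^sub>R v i))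
                        *\<^sub>R (\<Sum>i=1..r. \<alpha>1 i *\<^sub>R u i - \<alpha>2 i *\<^sub>R v i)"
    and xo_def: "xo = (1 / norm (\<Sum>i=1..r. - (\<alpha>1 i *\<^sub>R v i) - \<alpha>2 i *\<^sub>R u i))
                        *\<^sub>R (\<Sum>i=1..r. - (\<alpha>1 i *\<^sub>R v i) - \<alpha>2 i *\<^sub>R u i)"
  shows "(\<lambda>k. q (2 * k)) \<longlonglongrightarrow> xe
    \<and> (\<lambda>k. q (2 * k - 1)) \<longlonglongrightarrow> xo
    \<and> xo \<bullet> xe = 0
    \<and> S *v xo = - (\<sigma> 1 *\<^sub>R xe)
    \<and> S *v xe = \<sigma> 1 *\<^sub>R xo
    \<and> cmat S *v ((sqrt 2 / 2) *\<^sub>R cvec xo xe) = (\<i> * complex_of_real (\<sigma> 1)) *s ((sqrt 2 / 2) *\<^sub>R cvec xo xe)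
    \<and> norm ((sqrt 2 / 2) *\<^sub>R cvec xo xe) = 1
    \<and> cmat S *v ((sqrt 2 / 2) *\<^sub>R cvec xo (- xe)) = (- \<i> * complex_of_real (\<sigma> 1)) *s ((sqrt 2 / 2) *\<^sub>R cvec xo (- xe))
    \<and> norm ((sqrt 2 / 2) *\<^sub>R cvec xo (- xe)) = 1
    \<and> (\<forall>k\<ge>1. \<bar>tan (acute_angle (q (2 * k)) xe)\<bar>
            \<le> (\<sigma> (r + 1) / \<sigma> 1) ^ (2 * k) * \<bar>tan (acute_angle (q 0) xe)\<bar>)
    \<and> (\<forall>k\<ge>1. \<bar>tan (acute_angle (q (2 * k - 1)) xo)\<bar>
            \<le> (\<sigma> (r + 1) / \<sigma> 1) ^ (2 * (k - 1)) * \<bar>tan (acute_angle (S *v q 0) xo)\<bar>)"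
proof -
  interpret power_iteration S m r \<sigma> u v \<alpha>1 \<alpha>2 q
    by unfold_locales (fact r sig_top sig_gap sig_mono sig_pos uu vv uv Sv Su
      alpha_pos q0 q0_unit q_odd q_even)+
  have xe: "xe = x_even"
    by (simp add: xe_def dominant_part_eq_sum scaleR_inverse_norm_eq_sgn)
  have xo: "xo = x_odd"
    by (simp add: xo_def dominant_part_eq_sum scaleR_inverse_norm_eq_sgn algebra_simps)
  have conj_eigen: "S *v x_odd = - ((- \<sigma> 1) *\<^sub>R (- x_even))" "S *v (- x_even) = (- \<sigma> 1) *\<^sub>R x_odd"
    using matrix_vector_mult_x_odd matrix_vector_mult_x_even matrix_vector_mult_scaleR[of S "-1" x_even]
    by simp_all
  show ?thesis
    unfolding xe xo
    using q_even_tendsto q_odd_tendsto inner_x_odd_x_even matrix_vector_mult_x_odd matrix_vector_mult_x_even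
      cmat_scaleR_cvec_eigenvector[OF matrix_vector_mult_x_odd matrix_vector_mult_x_even]
      cmat_scaleR_cvec_eigenvector[OF conj_eigen]
      norm_scaleR_cvec_unit[OF x_odd_unit x_even_unit]
      norm_scaleR_cvec_unit[OF x_odd_unit, of "- x_even"] x_even_unit tan_q_even_le tan_q_odd_le
    by simp
qed

end
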